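(* Let $\mathbb{G}$ be a linear array (finite set of integers with $\min\mathbb{G}=0$) whose difference coarray $\mathbb{D}$ is hole-free, and let $M=|\mathbb{U}|=|\mathbb{D}|$. For every $r\ge 1$, the difference coarray $\mathbb{D}_r$ of the fractal array $\mathbb{F}_r$ generated by $\mathbb{G}$ is hole-free, and $$\mathbb{D}_r=\left[-\tfrac{M^r-1}{2},\tfrac{M^r-1}{2}\right]\cap\mathbb{Z}.$$
   Context: A linear array is a finite set $\mathbb{G}\subset\mathbb{Z}$ of sensor positions, normalized so that $\min\mathbb{G}=0$. Its difference coarray is $\mathbb{D}=\{n_1-n_2: n_1,n_2\in\mathbb{G}\}$. For $m\ge 0$ let $\mathbb{U}_m=\{-m,\dots,-1,0,1,\dots,m\}$; the central ULA $\mathbb{U}$ of $\mathbb{D}$ is the largest $\mathbb{U}_m$ contained in $\mathbb{D}$ (so $|\mathbb{U}|$ is odd). $\mathbb{D}$ is hole-free if $\mathbb{D}=\mathbb{U}$. For sets $A,B\subset\mathbb{Z}$, $A+B=\{a+b:a\in A,b\in B\}$ and $A+t=\{a+t:a\in A\}$. With $M=|\mathbb{U}|$, the fractal array generated by $\mathbb{G}$ is defined by $\mathbb{F}_0=\{0\}$ and $\mathbb{F}_{r+1}=\bigcup_{n\in\mathbb{G}}(\mathbb{F}_r+nM^r)$ for $r\ge 0$ (so $\mathbb{F}_1=\mathbb{G}$). *)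

theory Defs
  imports Main
begin

definition coarray :: "int set \<Rightarrow> int set" where
  "coarray G = {n1 - n2 | n1 n2. n1 \<in> G \<and> n2 \<in> G}"

definition ULA :: "nat \<Rightarrow> int set" where
  "ULA m = {- int m .. int m}"

definition central_ULA :: "int set \<Rightarrow> int set" where
  "central_ULA D = ULA (GREATEST m. ULA m \<subseteq> D)"

definition hole_free :: "int set \<Rightarrow> bool" where
  "hole_free D \<longleftrightarrow> D = central_ULA D"

definition linear_array :: "int set \<Rightarrow> bool" where
  "linear_array G \<longleftrightarrow> finite G \<and> G \<noteq> {} \<and> Min G = 0"

fun fractal :: "int set \<Rightarrow> nat \<Rightarrow> nat \<Rightarrow> int set" where
  "fractal G M 0 = {0}"
| "fractal G M (Suc r) = (\<Union>n\<in>G. (\<lambda>x. x + n * int M ^ r) ` fractal G M r)"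

end

theory Submission
  imports Defs
begin

text \<open>
  The coarray of \<open>F\<^sub>r\<^sub>+\<^sub>1\<close> is the sumset \<open>D\<^sub>r + M\<^sup>r D\<close>. If \<open>D = [-m, m]\<close>, \<open>M = 2m + 1\<close>
  and inductively \<open>D\<^sub>r = [-k, k]\<close> with \<open>M\<^sup>r = 2k + 1\<close>, this sumset is \<open>[-k, k] + (2k + 1)[-m, m]\<close>,
  i.e. balanced mixed-radix numerals with one more digit, which fill \<open>[-k', k']\<close> without gaps
  for \<open>2k' + 1 = (2k + 1)(2m + 1) = M\<^sup>r\<^sup>+\<^sup>1\<close>.
\<close>

lemma symmetric_interval_plus_scaled_interval:
  fixes k m :: int
  assumes "k \<ge> 0" and "m \<ge> 0"
  shows "{a + (2*k+1)*b | a b. a \<in> {-k..k} \<and> b \<in> {-m..m}} = {-((2*k+1)*m+k) .. (2*k+1)*m+k}"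
    (is "?S = ?I")
proof
  show "?S \<subseteq> ?I"
  proof clarify
    fix a b assume "a \<in> {-k..k}" "b \<in> {-m..m}"
    moreover have "(2*k+1)*b \<le> (2*k+1)*m" "(2*k+1)*(-m) \<le> (2*k+1)*b"
      using \<open>b \<in> {-m..m}\<close> \<open>k \<ge> 0\<close> by (auto intro!: mult_left_mono simp del: mult_minus_right)
    ultimately show "a + (2*k+1)*b \<in> ?I" by (simp add: algebra_simps)
  qed
next
  show "?I \<subseteq> ?S"
  proof
    fix x assume x: "x \<in> ?I"
    define K where "K = 2*k+1"
    have "K > 0" using \<open>k \<ge> 0\<close> by (simp add: K_def)
    define a where "a = (x+k) mod K - k"
    define b where "b = (x+k) div K"
    have x_eq: "x = a + K*b"
      using div_mult_mod_eq[of "x+k" K] by (simp add: a_def b_def algebra_simps)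
    have "0 \<le> (x+k) mod K" "(x+k) mod K < K" using \<open>K > 0\<close> by auto
    hence a: "a \<in> {-k..k}" by (auto simp: a_def K_def)
    have "K*(-m) \<le> x+k" using x \<open>k \<ge> 0\<close> by (auto simp: K_def algebra_simps)
    hence "(K*(-m)) div K \<le> b" unfolding b_def by (rule zdiv_mono1) (use \<open>K > 0\<close> in auto)
    hence "-m \<le> b" using \<open>K > 0\<close> by (subst (asm) nonzero_mult_div_cancel_left) auto
    moreover have "b \<le> m"
    proof (rule ccontr)
      assume "\<not> b \<le> m"
      hence "K*(m+1) \<le> K*b" using \<open>K > 0\<close> by (intro mult_left_mono) auto
      thus False using x x_eq a by (simp add: K_def algebra_simps)
    qed
    ultimately show "x \<in> ?S" using a x_eq by (auto simp: K_def)
  qed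
qed

lemma coarray_fractal_Suc:
  "coarray (fractal G M (Suc r))
     = {a + int M ^ r * b | a b. a \<in> coarray (fractal G M r) \<and> b \<in> coarray G}"
proof (rule set_eqI, rule iffI)
  fix z assume "z \<in> coarray (fractal G M (Suc r))"
  then obtain n1 n2 x y where "z = (x + n1 * int M ^ r) - (y + n2 * int M ^ r)"
    and "n1 \<in> G" "n2 \<in> G" "x \<in> fractal G M r" "y \<in> fractal G M r"
    unfolding coarray_def fractal.simps by blast
  moreover have "z = (x - y) + int M ^ r * (n1 - n2)" if "z = (x + n1 * int M ^ r) - (y + n2 * int M ^ r)"
    using that by (simp add: algebra_simps)
  ultimately show "z \<in> {a + int M ^ r * b | a b. a \<in> coarray (fractal G M r) \<and> b \<in> coarray G}"
    unfolding coarray_def by blast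
next
  fix z assume "z \<in> {a + int M ^ r * b | a b. a \<in> coarray (fractal G M r) \<and> b \<in> coarray G}"
  then obtain n1 n2 x y where "z = (x - y) + int M ^ r * (n1 - n2)"
    and "n1 \<in> G" "n2 \<in> G" "x \<in> fractal G M r" "y \<in> fractal G M r"
    unfolding coarray_def by blast
  moreover have "z = (x + n1 * int M ^ r) - (y + n2 * int M ^ r)" if "z = (x - y) + int M ^ r * (n1 - n2)"
    using that by (simp add: algebra_simps)
  ultimately show "z \<in> coarray (fractal G M (Suc r))"
    unfolding coarray_def fractal.simps by blast
qed

lemma odd_int_eq_double_half_plus_one: "odd (n::int) \<Longrightarrow> n = 2 * ((n - 1) div 2) + 1"
  by (elim oddE) simp

lemma coarray_fractal_symmetric_interval:
  fixes m :: nat and k :: int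
  assumes D: "coarray G = {- int m .. int m}"
    and "int (2*m+1) ^ r = 2*k + 1"
  shows "coarray (fractal G (2*m+1) r) = {-k..k}"
  using assms(2)
proof (induction r arbitrary: k)
  case 0
  then show ?case by (simp add: coarray_def)
next
  case (Suc r)
  define j where "j = (int (2*m+1) ^ r - 1) div 2"
  have j: "int (2*m+1) ^ r = 2*j + 1"
    unfolding j_def by (rule odd_int_eq_double_half_plus_one) simp
  hence "j \<ge> 0" by (smt (verit) of_nat_0_le_iff zero_le_power)
  have "2*k + 1 = (2*j+1) * (2 * int m + 1)" using Suc.prems j by (simp add: algebra_simps)
  hence k: "k = (2*j+1) * int m + j" by (simp add: algebra_simps)
  have "coarray (fractal G (2*m+1) (Suc r))
          = {a + (2*j+1)*b | a b. a \<in> {-j..j} \<and> b \<in> {-int m..int m}}"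
    unfolding coarray_fractal_Suc Suc.IH[OF j] D j by simp
  also have "\<dots> = {-k..k}"
    unfolding k by (rule symmetric_interval_plus_scaled_interval) (use \<open>j \<ge> 0\<close> in auto)
  finally show ?case .
qed

lemma central_ULA_symmetric_interval:
  fixes k :: int
  assumes "k \<ge> 0"
  shows "central_ULA {-k..k} = {-k..k}"
proof -
  have "(GREATEST m. ULA m \<subseteq> {-k..k}) = nat k"
  proof (rule Greatest_equality)
    show "ULA (nat k) \<subseteq> {-k..k}" using assms by (auto simp: ULA_def)
  next
    fix y assume "ULA y \<subseteq> {-k..k}"
    hence "int y \<in> {-k..k}" by (auto simp: ULA_def)
    thus "y \<le> nat k" by auto
  qed
  thus ?thesis using assms by (simp add: central_ULA_def ULA_def)
qed

lemma hole_free_symmetric_interval: "k \<ge> 0 \<Longrightarrow> hole_free {-k..k}"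
  by (simp add: hole_free_def central_ULA_symmetric_interval)

theorem theorem1:
  fixes G :: "int set" and r :: nat
  assumes "linear_array G"
    and "hole_free (coarray G)"
    and "r \<ge> 1"
  defines "M \<equiv> card (central_ULA (coarray G))"
  shows "hole_free (coarray (fractal G M r))
     \<and> coarray (fractal G M r) = {- ((int M ^ r - 1) div 2) .. (int M ^ r - 1) div 2}"
proof -
  define m where "m = (GREATEST m. ULA m \<subseteq> coarray G)"
  have D: "coarray G = {- int m .. int m}"
    using assms(2) by (simp add: hole_free_def central_ULA_def m_def ULA_def)
  hence "M = 2*m+1"
    using assms(2) by (simp add: M_def hole_free_def)
  define k where "k = (int M ^ r - 1) div 2"
  have Mr: "int M ^ r = 2*k + 1"
    unfolding k_def by (rule odd_int_eq_double_half_plus_one) (simp add: \<open>M = 2*m+1\<close>)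
  hence "k \<ge> 0" by (smt (verit) of_nat_0_le_iff zero_le_power)
  have "coarray (fractal G M r) = {-k..k}"
    using coarray_fractal_symmetric_interval[OF D] Mr \<open>M = 2*m+1\<close> by simp
  with \<open>k \<ge> 0\<close> show ?thesis
    by (simp add: k_def hole_free_symmetric_interval)
qed

end
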